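(* For a happy sequent $G$, its model $\mathcal{M}(G)=\langle \mathrm{Lab}(G), \le_G, R_G, V\rangle$ is a birelational model in which $R_G$ is transitive and reflexive, and which has the following two properties: (i) if $x:A$ occurs on the left-hand side of $G$, then $x \Vdash A$ in $\mathcal{M}(G)$; (ii) if $x:A$ occurs on the right-hand side of $G$, then $x \not\Vdash A$ in $\mathcal{M}(G)$.
   Context: Formulas are built from atoms $a$ and $\bot$ by $\wedge,\vee,\supset,\Box,\Diamond$. A birelational model $\langle W,R,\le,V\rangle$ consists of a nonempty set $W$, a relation $R$, a preorder $\le$ on $W$ satisfying (F1) if $xRy$ and $y\le z$ then there is $u$ with $x\le u$ and $uRz$, and (F2) if $x\le z$ and $xRy$ then there is $u$ with $zRu$ and $y\le u$, and a valuation $V\colon W\to 2^{\mathrm{Atoms}}$ that is monotone along $\le$. Forcing: $w\Vdash a$ iff $a\in V(w)$; $w\not\Vdash\bot$; $\wedge,\vee$ pointwise; $w\Vdash A\supset B$ iff for all $w'\ge w$, $w'\Vdash A$ implies $w'\Vdash B$; $w\Vdash\Box A$ iff for all $w',u$ with $w\le w'$ and $w'Ru$, $u\Vdash A$; $w\Vdash\Diamond A$ iff there is $u$ with $wRu$ and $u\Vdash A$. A labelled sequent $G$ is $\mathcal{R},\Gamma\Longrightarrow\Delta$, where $\mathcal{R}$ is a set of relational atoms $x\le y$ and $xRy$ between labels, and $\Gamma,\Delta$ are multisets of labelled formulas $x:A$. Write $x\le_G y$ ($xR_Gy$) if that atom is in $\mathcal{R}$; write $x:A^\bullet$ if $x:A\in\Gamma$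 and $x:A^\circ$ if $x:A\in\Delta$; $\mathrm{Lab}(G)$ is the set of labels of $G$. A labelled formula is happy in $G$ as follows: $x:a^\bullet$ always; $x:a^\circ$ iff not $x:a^\bullet$; $x:\bot^\bullet$ never; $x:\bot^\circ$ always; $x:(A\wedge B)^\bullet$ iff $x:A^\bullet$ and $x:B^\bullet$; $x:(A\wedge B)^\circ$ iff $x:A^\circ$ or $x:B^\circ$; $x:(A\vee B)^\bullet$ iff $x:A^\bullet$ or $x:B^\bullet$; $x:(A\vee B)^\circ$ iff $x:A^\circ$ and $x:B^\circ$; $x:(A\supset B)^\bullet$ iff $x:A^\circ$ or $x:B^\bullet$; $x:(A\supset B)^\circ$ iff $y:A^\bullet$ and $y:B^\circ$ for some $y$ with $x\le_G y$; $x:(\Box A)^\bullet$ iff $z:A^\bullet$ and $z:(\Box A)^\bullet$ for all $z$ with $xR_Gz$; $x:(\Box A)^\circ$ iff $z:A^\circ$ for some $y,z$ with $x\le_G y$, $yR_Gz$; $x:(\Diamond A)^\bullet$ iff $y:A^\bullet$ for some $y$ with $xR_Gy$; $x:(\Diamond A)^\circ$ iff $y:A^\circ$ and $y:(\Diamond A)^\circ$ for all $y$ with $xR_Gy$. A label is happy iff all formulas occurring at it are happy. $G$ is structurally saturated iff: if $x\le_G y$ and $x:C^\bullet$ then $y:C^\bullet$; (F1) and (F2) hold for $R_G,\le_G$; $\le_G$ and $R_G$ are reflexive on all labels of $G$ and transitive. $G$ is happy iff it is structurally saturated and all its labels are happy. The model of $G$ is $\mathcal{M}(G)=\langle \mathrm{Lab}(G),\le_G,R_G,V\rangle$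 with $a\in V(w)$ iff $w:a^\bullet$ in $G$. *)

theory Defs
  imports Main "HOL-Library.Multiset"
begin

datatype 'a fm =
    Atom 'a
  | Bot
  | And "'a fm" "'a fm"
  | Or "'a fm" "'a fm"
  | Imp "'a fm" "'a fm"
  | Box "'a fm"
  | Dia "'a fm"

text \<open>A birelational model with carrier W, modal relation R, intuitionistic preorder le
  and valuation V. Relations are given as predicates; they are required to live on W.\<close>

definition birel_model ::
  "'w set \<Rightarrow> ('w \<Rightarrow> 'w \<Rightarrow> bool) \<Rightarrow> ('w \<Rightarrow> 'w \<Rightarrow> bool) \<Rightarrow> ('w \<Rightarrow> 'a set) \<Rightarrow> bool" where
  "birel_model W R le V \<longleftrightarrow>
     W \<noteq> {} \<and>
     (\<forall>x y. R x y \<longrightarrow> x \<in> W \<and> y \<in> W) \<and>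
     (\<forall>x y. le x y \<longrightarrow> x \<in> W \<and> y \<in> W) \<and>
     (\<forall>x\<in>W. le x x) \<and>
     (\<forall>x y z. le x y \<longrightarrow> le y z \<longrightarrow> le x z) \<and>
     (\<forall>x y z. R x y \<longrightarrow> le y z \<longrightarrow> (\<exists>u. le x u \<and> R u z)) \<and>
     (\<forall>x y z. le x z \<longrightarrow> R x y \<longrightarrow> (\<exists>u. R z u \<and> le y u)) \<and>
     (\<forall>x y. le x y \<longrightarrow> V x \<subseteq> V y)"

fun forces ::
  "('w \<Rightarrow> 'w \<Rightarrow> bool) \<Rightarrow> ('w \<Rightarrow> 'w \<Rightarrow> bool) \<Rightarrow> ('w \<Rightarrow> 'a set) \<Rightarrow> 'w \<Rightarrow> 'a fm \<Rightarrow> bool" where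
  "forces R le V w (Atom a) = (a \<in> V w)"
| "forces R le V w Bot = False"
| "forces R le V w (And A B) = (forces R le V w A \<and> forces R le V w B)"
| "forces R le V w (Or A B) = (forces R le V w A \<or> forces R le V w B)"
| "forces R le V w (Imp A B) =
     (\<forall>w'. le w w' \<longrightarrow> forces R le V w' A \<longrightarrow> forces R le V w' B)"
| "forces R le V w (Box A) = (\<forall>w' u. le w w' \<longrightarrow> R w' u \<longrightarrow> forces R le V u A)"
| "forces R le V w (Dia A) = (\<exists>u. R w u \<and> forces R le V u A)"

datatype 'l rel_atom = LeAt 'l 'l | RAt 'l 'l

datatype ('l, 'a) sequent =
  Sequent "'l rel_atom set" "('l \<times> 'a fm) multiset" "('l \<times> 'a fm) multiset"

fun rels :: "('l, 'a) sequent \<Rightarrow> 'l rel_atom set" where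
  "rels (Sequent \<R> \<Gamma> \<Delta>) = \<R>"
fun lhs :: "('l, 'a) sequent \<Rightarrow> ('l \<times> 'a fm) multiset" where
  "lhs (Sequent \<R> \<Gamma> \<Delta>) = \<Gamma>"
fun rhs :: "('l, 'a) sequent \<Rightarrow> ('l \<times> 'a fm) multiset" where
  "rhs (Sequent \<R> \<Gamma> \<Delta>) = \<Delta>"

definition leG :: "('l, 'a) sequent \<Rightarrow> 'l \<Rightarrow> 'l \<Rightarrow> bool" where
  "leG G x y \<longleftrightarrow> LeAt x y \<in> rels G"
definition RG :: "('l, 'a) sequent \<Rightarrow> 'l \<Rightarrow> 'l \<Rightarrow> bool" where
  "RG G x y \<longleftrightarrow> RAt x y \<in> rels G"

definition inL :: "('l, 'a) sequent \<Rightarrow> 'l \<Rightarrow> 'a fm \<Rightarrow> bool" where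
  "inL G x A \<longleftrightarrow> (x, A) \<in># lhs G"
definition inR :: "('l, 'a) sequent \<Rightarrow> 'l \<Rightarrow> 'a fm \<Rightarrow> bool" where
  "inR G x A \<longleftrightarrow> (x, A) \<in># rhs G"

fun labs_rel :: "'l rel_atom \<Rightarrow> 'l set" where
  "labs_rel (LeAt x y) = {x, y}"
| "labs_rel (RAt x y) = {x, y}"

definition Lab :: "('l, 'a) sequent \<Rightarrow> 'l set" where
  "Lab G = (\<Union>r\<in>rels G. labs_rel r) \<union> fst ` set_mset (lhs G) \<union> fst ` set_mset (rhs G)"

fun happyL :: "('l, 'a) sequent \<Rightarrow> 'l \<Rightarrow> 'a fm \<Rightarrow> bool" where
  "happyL G x (Atom a) = True"
| "happyL G x Bot = False"
| "happyL G x (And A B) = (inL G x A \<and> inL G x B)"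
| "happyL G x (Or A B) = (inL G x A \<or> inL G x B)"
| "happyL G x (Imp A B) = (inR G x A \<or> inL G x B)"
| "happyL G x (Box A) = (\<forall>z. RG G x z \<longrightarrow> inL G z A \<and> inL G z (Box A))"
| "happyL G x (Dia A) = (\<exists>y. RG G x y \<and> inL G y A)"

fun happyR :: "('l, 'a) sequent \<Rightarrow> 'l \<Rightarrow> 'a fm \<Rightarrow> bool" where
  "happyR G x (Atom a) = (\<not> inL G x (Atom a))"
| "happyR G x Bot = True"
| "happyR G x (And A B) = (inR G x A \<or> inR G x B)"
| "happyR G x (Or A B) = (inR G x A \<and> inR G x B)"
| "happyR G x (Imp A B) = (\<exists>y. leG G x y \<and> inL G y A \<and> inR G y B)"
| "happyR G x (Box A) = (\<exists>y z. leG G x y \<and> RG G y z \<and> inR G z A)"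
| "happyR G x (Dia A) = (\<forall>y. RG G x y \<longrightarrow> inR G y A \<and> inR G y (Dia A))"

definition happy_label :: "('l, 'a) sequent \<Rightarrow> 'l \<Rightarrow> bool" where
  "happy_label G x \<longleftrightarrow>
     (\<forall>A. (inL G x A \<longrightarrow> happyL G x A) \<and> (inR G x A \<longrightarrow> happyR G x A))"

definition struct_saturated :: "('l, 'a) sequent \<Rightarrow> bool" where
  "struct_saturated G \<longleftrightarrow>
     (\<forall>x y C. leG G x y \<longrightarrow> inL G x C \<longrightarrow> inL G y C) \<and>
     (\<forall>x y z. RG G x y \<longrightarrow> leG G y z \<longrightarrow> (\<exists>u. leG G x u \<and> RG G u z)) \<and>
     (\<forall>x y z. leG G x z \<longrightarrow> RG G x y \<longrightarrow> (\<exists>u. RG G z u \<and> leG G y u)) \<and>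
     (\<forall>x\<in>Lab G. leG G x x \<and> RG G x x) \<and>
     (\<forall>x y z. leG G x y \<longrightarrow> leG G y z \<longrightarrow> leG G x z) \<and>
     (\<forall>x y z. RG G x y \<longrightarrow> RG G y z \<longrightarrow> RG G x z)"

definition happy :: "('l, 'a) sequent \<Rightarrow> bool" where
  "happy G \<longleftrightarrow> struct_saturated G \<and> (\<forall>x\<in>Lab G. happy_label G x)"

definition VG :: "('l, 'a) sequent \<Rightarrow> 'l \<Rightarrow> 'a set" where
  "VG G w = {a. inL G w (Atom a)}"

end

theory Submission
  imports Defs
begin

text \<open>The frame conditions of the model are literally those of structural saturation. The
  truth lemma goes by induction on the formula: happiness of a label supplies exactly the
  witness demanded by each existential forcing clause (implication and box on the right,
  diamond on the left), while the universal clauses of implication and box on the left range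
  over \<open>\<le>\<close>-successors, which carry every left formula by saturation and are happy
  themselves.\<close>

lemma inL_in_Lab: "inL G x A \<Longrightarrow> x \<in> Lab G"
  unfolding inL_def Lab_def by force

lemma inR_in_Lab: "inR G x A \<Longrightarrow> x \<in> Lab G"
  unfolding inR_def Lab_def by force

lemma leG_in_Lab: "leG G x y \<Longrightarrow> x \<in> Lab G \<and> y \<in> Lab G"
  unfolding leG_def Lab_def by force

lemma RG_in_Lab: "RG G x y \<Longrightarrow> x \<in> Lab G \<and> y \<in> Lab G"
  unfolding RG_def Lab_def by force

lemma struct_saturated_birel_model:
  assumes "struct_saturated G" and "Lab G \<noteq> {}"
  shows "birel_model (Lab G) (RG G) (leG G) (VG G)"
proof -
  have "\<forall>x y. leG G x y \<longrightarrow> VG G x \<subseteq> VG G y"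
    using assms(1) unfolding struct_saturated_def VG_def by blast
  moreover have "\<forall>x\<in>Lab G. leG G x x"
    using assms(1) unfolding struct_saturated_def by blast
  ultimately show ?thesis
    using assms unfolding birel_model_def struct_saturated_def
    by (simp add: RG_in_Lab leG_in_Lab)
qed

lemma happy_inL_happyL: "happy G \<Longrightarrow> inL G x A \<Longrightarrow> happyL G x A"
  using inL_in_Lab[of G x A] unfolding happy_def happy_label_def by blast

lemma happy_inR_happyR: "happy G \<Longrightarrow> inR G x A \<Longrightarrow> happyR G x A"
  using inR_in_Lab[of G x A] unfolding happy_def happy_label_def by blast

lemma happy_inL_mono: "happy G \<Longrightarrow> leG G x y \<Longrightarrow> inL G x A \<Longrightarrow> inL G y A"
  unfolding happy_def struct_saturated_def by blast

abbreviation forcesG :: "('l, 'a) sequent \<Rightarrow> 'l \<Rightarrow> 'a fm \<Rightarrow> bool" where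
  "forcesG G \<equiv> forces (RG G) (leG G) (VG G)"

lemma happy_truth:
  assumes "happy G"
  shows "(inL G x A \<longrightarrow> forcesG G x A) \<and> (inR G x A \<longrightarrow> \<not> forcesG G x A)"
proof (induction A arbitrary: x)
  case (Atom a)
  show ?case
    using happy_inR_happyR[OF assms, of x "Atom a"] by (auto simp: VG_def)
next
  case Bot
  show ?case
    using happy_inL_happyL[OF assms, of x Bot] by auto
next
  case (And A B)
  then show ?case
    using happy_inL_happyL[OF assms, of x "And A B"] happy_inR_happyR[OF assms, of x "And A B"]
    by auto
next
  case (Or A B)
  then show ?case
    using happy_inL_happyL[OF assms, of x "Or A B"] happy_inR_happyR[OF assms, of x "Or A B"]
    by auto
next
  case (Imp A B)
  have "forcesG G x (Imp A B)" if "inL G x (Imp A B)"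
  proof (simp, intro allI impI)
    fix w assume "leG G x w" and "forcesG G w A"
    with that have "inL G w (Imp A B)" using happy_inL_mono[OF assms] by blast
    then have "inR G w A \<or> inL G w B" using happy_inL_happyL[OF assms] by fastforce
    with Imp.IH \<open>forcesG G w A\<close> show "forcesG G w B" by blast
  qed
  moreover have "\<not> forcesG G x (Imp A B)" if "inR G x (Imp A B)"
    using happy_inR_happyR[OF assms that] Imp.IH by auto
  ultimately show ?case by blast
next
  case (Box A)
  have "forcesG G x (Box A)" if "inL G x (Box A)"
  proof (simp, intro allI impI)
    fix w u assume "leG G x w" and "RG G w u"
    with that have "inL G w (Box A)" using happy_inL_mono[OF assms] by blast
    with \<open>RG G w u\<close> have "inL G u A" using happy_inL_happyL[OF assms] by fastforce
    with Box.IH show "forcesG G u A" by blast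
  qed
  moreover have "\<not> forcesG G x (Box A)" if "inR G x (Box A)"
    using happy_inR_happyR[OF assms that] Box.IH by auto
  ultimately show ?case by blast
next
  case (Dia A)
  then show ?case
    using happy_inL_happyL[OF assms, of x "Dia A"] happy_inR_happyR[OF assms, of x "Dia A"]
    by auto
qed

theorem mainTheorem3:
  fixes G :: "('l, 'a) sequent"
  assumes "happy G"
    and "Lab G \<noteq> {}"
  shows "birel_model (Lab G) (RG G) (leG G) (VG G)
       \<and> (\<forall>x\<in>Lab G. RG G x x)
       \<and> (\<forall>x y z. RG G x y \<longrightarrow> RG G y z \<longrightarrow> RG G x z)
       \<and> (\<forall>x A. (x, A) \<in># lhs G \<longrightarrow> forces (RG G) (leG G) (VG G) x A)
       \<and> (\<forall>x A. (x, A) \<in># rhs G \<longrightarrow> \<not> forces (RG G) (leG G) (VG G) x A)"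
proof -
  have saturated: "struct_saturated G"
    using assms(1) unfolding happy_def by simp
  then have "\<forall>x\<in>Lab G. RG G x x" and "\<forall>x y z. RG G x y \<longrightarrow> RG G y z \<longrightarrow> RG G x z"
    unfolding struct_saturated_def by simp_all
  moreover have "birel_model (Lab G) (RG G) (leG G) (VG G)"
    using struct_saturated_birel_model[OF saturated assms(2)] .
  moreover have "\<forall>x A. (x, A) \<in># lhs G \<longrightarrow> forcesG G x A"
    and "\<forall>x A. (x, A) \<in># rhs G \<longrightarrow> \<not> forcesG G x A"
    using happy_truth[OF assms(1)] unfolding inL_def inR_def by simp_all
  ultimately show ?thesis by simp
qed

end
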